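(* Let $1\ge\Delta^{-1},q\gg L^{-1}\gg n^{-1}$. Let $G$ be a $q$-cut-dense graph of order $n$, let $v\in V(G)$ and let $U\subseteq V(G)$ with $|U|\ge L$. Then $G$ contains, as a subgraph, a perfect $\Delta$-ary tree of height at most $19q^{-4}$ rooted at $v$ with all its leaves in $U$.
   Context: A graph $G$ is $q$-cut-dense if for every partition $V(G)=A\cup B$ into disjoint sets, the number of edges between $A$ and $B$ is at least $q|A||B|$. A $\Delta$-ary tree is one in which every non-leaf vertex has degree $\Delta$; a perfect $\Delta$-ary tree of height $h$ has a designated root with every leaf at distance $h$ from the root. The hierarchy means: given $\Delta$ and $q$, $L$ is sufficiently large, and given $L$, $n$ is sufficiently large. *)

theory Defs
  imports Complex_Main
begin

definition simple_graph :: "'a set \<Rightarrow> ('a \<Rightarrow> 'a \<Rightarrow> bool) \<Rightarrow> bool" where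
  "simple_graph V E \<longleftrightarrow> finite V \<and>
     (\<forall>x y. E x y \<longrightarrow> x \<in> V \<and> y \<in> V) \<and>
     (\<forall>x y. E x y \<longrightarrow> E y x) \<and> (\<forall>x. \<not> E x x)"

definition e_between :: "('a \<Rightarrow> 'a \<Rightarrow> bool) \<Rightarrow> 'a set \<Rightarrow> 'a set \<Rightarrow> nat" where
  "e_between E A B = card {(a, b). a \<in> A \<and> b \<in> B \<and> E a b}"

definition cut_dense :: "'a set \<Rightarrow> ('a \<Rightarrow> 'a \<Rightarrow> bool) \<Rightarrow> real \<Rightarrow> bool" where
  "cut_dense V E q \<longleftrightarrow>
     (\<forall>A B. A \<union> B = V \<and> A \<inter> B = {} \<longrightarrow>
        real (e_between E A B) \<ge> q * real (card A) * real (card B))"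

text \<open>The tree is given by its vertex set T \<subseteq> V, a parent map par (tree edges
  are {x, par x} for x \<in> T - {v}, which must be edges of G) and a depth map dep.
  Non-leaf vertices (depth < h) have degree \<Delta> in the tree: the root has \<Delta> children,
  other non-leaf vertices have \<Delta>-1 children plus their parent.\<close>
definition perfect_tree_in ::
  "'a set \<Rightarrow> ('a \<Rightarrow> 'a \<Rightarrow> bool) \<Rightarrow> nat \<Rightarrow> nat \<Rightarrow> 'a \<Rightarrow> 'a set
   \<Rightarrow> 'a set \<Rightarrow> ('a \<Rightarrow> 'a) \<Rightarrow> ('a \<Rightarrow> nat) \<Rightarrow> bool" where
  "perfect_tree_in V E \<Delta> h v U T par dep \<longleftrightarrow>
     T \<subseteq> V \<and> v \<in> T \<and> dep v = 0 \<and>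
     (\<forall>x\<in>T. dep x \<le> h) \<and>
     (\<forall>x\<in>T - {v}. par x \<in> T \<and> dep x = dep (par x) + 1 \<and> E x (par x)) \<and>
     (\<forall>x\<in>T. dep x < h \<longrightarrow>
        card {y \<in> T - {v}. par y = x} = (if x = v then \<Delta> else \<Delta> - 1)) \<and>
     (\<forall>x\<in>T. dep x = h \<longrightarrow> x \<in> U)"

end

(*
  Call a vertex rich for a set S if it has at least M neighbours in S, and put S_0 = U and
  S_(k+1) = the vertices rich for S_k. Every vertex of S_k roots a perfect Delta-ary tree of
  height k with leaves in U, as long as (Delta + 1)^k <= M: the tree is built greedily, each new
  child being a neighbour in the previous level that avoids the fewer than M vertices used so
  far. So it suffices to show that v lies in some S_h with h <= H = O(q^-3), and to take
  M = (Delta + 1)^H.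

  Cut-density gives minimum degree q(n - 1), and hence every level after U has at least qn/2
  vertices. Applying the cut condition to the window W_k = S_k u S_(k+1) shows that, while at
  least qn/2 vertices lie outside W_k, the window W_(k+2) is larger than W_k by q^3 n/5 (up to
  the few vertices of W_k with fewer than M neighbours in the next level). After about 5/q^3
  double steps fewer than qn/2 vertices lie outside the window, and then v has M neighbours in
  S_k or in S_(k+1).
*)

theory Submission
  imports Defs
begin

text \<open>As \<^const>\<open>perfect_tree_in\<close>, except that the root has \<open>r\<close> children; the
  greedy embedding attaches the subtrees of the root one at a time.\<close>
definition rooted_tree_in ::
  "'a set \<Rightarrow> ('a \<Rightarrow> 'a \<Rightarrow> bool) \<Rightarrow> nat \<Rightarrow> nat \<Rightarrow> nat \<Rightarrow> 'a \<Rightarrow> 'a set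
   \<Rightarrow> 'a set \<Rightarrow> ('a \<Rightarrow> 'a) \<Rightarrow> ('a \<Rightarrow> nat) \<Rightarrow> bool" where
  "rooted_tree_in V E \<Delta> h r v U T par dep \<longleftrightarrow>
     T \<subseteq> V \<and> v \<in> T \<and> dep v = 0 \<and>
     (\<forall>x\<in>T. dep x \<le> h) \<and>
     (\<forall>x\<in>T - {v}. par x \<in> T \<and> dep x = dep (par x) + 1 \<and> E x (par x)) \<and>
     (\<forall>x\<in>T. dep x < h \<longrightarrow>
        card {y \<in> T - {v}. par y = x} = (if x = v then r else \<Delta> - 1)) \<and>
     (\<forall>x\<in>T. dep x = h \<longrightarrow> x \<in> U)"

lemma perfect_tree_in_eq_rooted_tree_in:
  "perfect_tree_in V E \<Delta> h v U T par dep = rooted_tree_in V E \<Delta> h \<Delta> v U T par dep"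
  unfolding perfect_tree_in_def rooted_tree_in_def ..

lemma rooted_tree_in_leaf:
  "x \<in> U \<Longrightarrow> U \<subseteq> V \<Longrightarrow> rooted_tree_in V E \<Delta> 0 r x U {x} par (\<lambda>_. 0)"
  unfolding rooted_tree_in_def by auto

lemma rooted_tree_in_childless_root:
  "x \<in> V \<Longrightarrow> rooted_tree_in V E \<Delta> (Suc k) 0 x U {x} par (\<lambda>_. 0)"
  unfolding rooted_tree_in_def by auto

lemma rooted_tree_in_graft:
  assumes "symp E"
    and T: "rooted_tree_in V E \<Delta> (Suc k) r x U T par dep" "finite T"
    and T': "rooted_tree_in V E \<Delta> k (\<Delta> - 1) y U T' par' dep'"
    and disj: "T \<inter> T' = {}" and "E x y"
  shows "\<exists>par'' dep''. rooted_tree_in V E \<Delta> (Suc k) (Suc r) x U (T \<union> T') par'' dep''"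
proof -
  define par'' where "par'' z = (if z \<in> T' then if z = y then x else par' z else par z)" for z
  define dep'' where "dep'' z = (if z \<in> T' then Suc (dep' z) else dep z)" for z
  have x: "x \<in> T" "x \<notin> T'" "dep x = 0" and y: "y \<in> T'" "y \<notin> T" "dep' y = 0"
    using T T' disj unfolding rooted_tree_in_def by auto
  have par_T: "par z \<in> T" "dep z = Suc (dep (par z))" "E z (par z)" if "z \<in> T - {x}" for z
    using T that unfolding rooted_tree_in_def by auto
  have par_T': "par' z \<in> T'" "dep' z = Suc (dep' (par' z))" "E z (par' z)" if "z \<in> T' - {y}" for z
    using T' that unfolding rooted_tree_in_def by auto
  have children_T: "{z \<in> (T \<union> T') - {x}. par'' z = w}
      = {z \<in> T - {x}. par z = w} \<union> (if w = x then {y} else {})" if "w \<in> T" for w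
    using that x y disj par_T' unfolding par''_def by auto
  have children_T': "{z \<in> (T \<union> T') - {x}. par'' z = w} = {z \<in> T' - {y}. par' z = w}"
    if "w \<in> T'" for w
    using that x y disj par_T unfolding par''_def by (fastforce simp: disjoint_iff)
  have "card {z \<in> (T \<union> T') - {x}. par'' z = w} = (if w = x then Suc r else \<Delta> - 1)"
    if w: "w \<in> T \<union> T'" "dep'' w < Suc k" for w
  proof (cases "w \<in> T")
    case True
    with w disj have "dep w < Suc k"
      unfolding dep''_def by (auto split: if_splits)
    with T True have "card {z \<in> T - {x}. par z = w} = (if w = x then r else \<Delta> - 1)"
      unfolding rooted_tree_in_def by auto
    with \<open>finite T\<close> y show ?thesis
      unfolding children_T[OF True] by (auto simp: card_insert_if)
  next
    case False
    with w have "w \<in> T'" "dep' w < k"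
      unfolding dep''_def by auto
    with T' x show ?thesis
      unfolding children_T'[OF \<open>w \<in> T'\<close>] rooted_tree_in_def by auto
  qed
  moreover have "par'' z \<in> T \<union> T' \<and> dep'' z = dep'' (par'' z) + 1 \<and> E z (par'' z)"
    if "z \<in> T \<union> T' - {x}" for z
    using that x y disj par_T par_T' \<open>E x y\<close> \<open>symp E\<close>
    unfolding par''_def dep''_def by (auto dest: sympD)
  ultimately have "rooted_tree_in V E \<Delta> (Suc k) (Suc r) x U (T \<union> T') par'' dep''"
    using T T' x unfolding rooted_tree_in_def dep''_def by auto
  then show ?thesis by blast
qed

definition degree_in :: "('a \<Rightarrow> 'a \<Rightarrow> bool) \<Rightarrow> 'a \<Rightarrow> 'a set \<Rightarrow> nat" where
  "degree_in E x S = card {y \<in> S. E x y}"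

lemma exists_fresh_neighbour:
  assumes "finite F" "card F < degree_in E x S"
  obtains y where "y \<in> S" "E x y" "y \<notin> F"
proof -
  have "\<not> {y \<in> S. E x y} \<subseteq> F"
    using card_mono[OF \<open>finite F\<close>] assms(2) unfolding degree_in_def by (meson not_le)
  then show ?thesis
    using that by blast
qed

lemma degree_in_le_card: "finite S \<Longrightarrow> degree_in E x S \<le> card S"
  unfolding degree_in_def by (rule card_mono) auto

lemma degree_in_split:
  assumes "finite S" "X \<subseteq> S"
  shows "degree_in E x S = degree_in E x X + degree_in E x (S - X)"
proof -
  have "degree_in E x S = card ({y \<in> X. E x y} \<union> {y \<in> S - X. E x y})"
    unfolding degree_in_def using assms(2) by (intro arg_cong[where f = card]) auto
  also have "\<dots> = card {y \<in> X. E x y} + card {y \<in> S - X. E x y}"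
    using assms by (intro card_Un_disjoint) (auto intro: finite_subset)
  finally show ?thesis
    unfolding degree_in_def .
qed

lemma degree_in_Un_le: "degree_in E x (A \<union> B) \<le> degree_in E x A + degree_in E x B"
proof -
  have "{y \<in> A \<union> B. E x y} = {y \<in> A. E x y} \<union> {y \<in> B. E x y}"
    by auto
  then show ?thesis
    unfolding degree_in_def by (simp add: card_Un_le)
qed

lemma sum_degree_in_swap:
  assumes "symp E" "finite A" "finite B"
  shows "(\<Sum>x\<in>A. degree_in E x B) = (\<Sum>y\<in>B. degree_in E y A)"
proof -
  have degree_in_sum: "degree_in E x S = (\<Sum>y\<in>S. if E x y then 1 else 0)" if "finite S" for x S
    unfolding degree_in_def card_eq_sum
    using sum.inter_filter[OF that, of "\<lambda>_. 1::nat" "E x"] by simp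
  have "(\<Sum>x\<in>A. degree_in E x B) = (\<Sum>x\<in>A. \<Sum>y\<in>B. if E x y then 1 else 0)"
    using assms by (simp add: degree_in_sum)
  also have "\<dots> = (\<Sum>y\<in>B. \<Sum>x\<in>A. if E x y then 1 else 0)"
    by (rule sum.swap)
  also have "\<dots> = (\<Sum>y\<in>B. \<Sum>x\<in>A. if E y x then 1 else 0)"
    by (intro sum.cong refl) (auto dest: sympD[OF \<open>symp E\<close>])
  also have "\<dots> = (\<Sum>y\<in>B. degree_in E y A)"
    using assms by (simp add: degree_in_sum)
  finally show ?thesis .
qed

lemma e_between_eq_sum_degree_in:
  assumes "finite A" "finite B"
  shows "e_between E A B = (\<Sum>a\<in>A. degree_in E a B)"
proof -
  have "{(a, b). a \<in> A \<and> b \<in> B \<and> E a b} = Sigma A (\<lambda>a. {b \<in> B. E a b})"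
    by auto
  then show ?thesis
    unfolding e_between_def degree_in_def using assms by simp
qed

definition rich_in :: "'a set \<Rightarrow> ('a \<Rightarrow> 'a \<Rightarrow> bool) \<Rightarrow> nat \<Rightarrow> 'a set \<Rightarrow> 'a set" where
  "rich_in V E M S = {x \<in> V. M \<le> degree_in E x S}"

fun level :: "'a set \<Rightarrow> ('a \<Rightarrow> 'a \<Rightarrow> bool) \<Rightarrow> nat \<Rightarrow> 'a set \<Rightarrow> nat \<Rightarrow> 'a set" where
  "level V E M U 0 = U"
| "level V E M U (Suc k) = rich_in V E M (level V E M U k)"

lemma level_subset: "U \<subseteq> V \<Longrightarrow> level V E M U k \<subseteq> V"
  by (cases k) (auto simp: rich_in_def)

lemma tree_from_level_Suc:
  assumes "symp E" and x: "x \<in> level V E M U (Suc k)" "x \<notin> F" and "finite F"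
    and room: "card F + (\<Delta> + 1) ^ Suc k \<le> M" and "r \<le> \<Delta>"
    and IH: "\<And>y F. y \<in> level V E M U k \<Longrightarrow> y \<notin> F \<Longrightarrow> finite F \<Longrightarrow>
      card F + (\<Delta> + 1) ^ k \<le> M \<Longrightarrow> \<exists>T par dep. rooted_tree_in V E \<Delta> k (\<Delta> - 1) y U T par dep \<and> finite T \<and> T \<inter> F = {}
        \<and> card T \<le> (\<Delta> + 1) ^ k"
  shows "\<exists>T par dep. rooted_tree_in V E \<Delta> (Suc k) r x U T par dep \<and> finite T \<and> T \<inter> F = {}
    \<and> card T \<le> 1 + r * (\<Delta> + 1) ^ k"
  using \<open>r \<le> \<Delta>\<close>
proof (induction r)
  case 0
  have "rooted_tree_in V E \<Delta> (Suc k) 0 x U {x} id (\<lambda>_. 0)"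
    using x by (intro rooted_tree_in_childless_root) (auto simp: rich_in_def)
  then show ?case using x by fastforce
next
  case (Suc r)
  define p where "p = (\<Delta> + 1) ^ k"
  obtain T par dep where T: "rooted_tree_in V E \<Delta> (Suc k) r x U T par dep" "finite T"
    "T \<inter> F = {}" "card T \<le> 1 + r * p"
    using Suc by (auto simp: p_def)
  have "p + r * p \<le> \<Delta> * p" "1 \<le> p" "(\<Delta> + 1) ^ Suc k = p + \<Delta> * p"
    using mult_le_mono1[OF Suc.prems, of p] by (simp_all add: p_def)
  then have card_F_T: "card (F \<union> T) + p \<le> M"
    using room card_Un_le[of F T] T(4) by linarith
  moreover have "M \<le> degree_in E x (level V E M U k)"
    using x by (simp add: rich_in_def)
  ultimately have "card (F \<union> T) < degree_in E x (level V E M U k)"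
    using \<open>1 \<le> p\<close> by linarith
  moreover have "finite (F \<union> T)"
    using \<open>finite F\<close> T(2) by simp
  ultimately obtain y where y: "y \<in> level V E M U k" "E x y" "y \<notin> F \<union> T"
    by (metis exists_fresh_neighbour)
  obtain T' par' dep' where T': "rooted_tree_in V E \<Delta> k (\<Delta> - 1) y U T' par' dep'" "finite T'"
    "T' \<inter> (F \<union> T) = {}" "card T' \<le> p"
    using IH[OF y(1,3)] \<open>finite F\<close> T(2) card_F_T by (auto simp: p_def)
  have "T \<inter> T' = {}"
    using T'(3) by blast
  then obtain par'' dep'' where "rooted_tree_in V E \<Delta> (Suc k) (Suc r) x U (T \<union> T') par'' dep''"
    using rooted_tree_in_graft[OF \<open>symp E\<close> T(1,2) T'(1) _ y(2)] by blast
  moreover have "finite (T \<union> T')" "(T \<union> T') \<inter> F = {}"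
    using T T' by auto
  moreover have "card (T \<union> T') \<le> 1 + Suc r * (\<Delta> + 1) ^ k"
    using T(4) T'(4) card_Un_le[of T T'] unfolding p_def by simp
  ultimately show ?case
    by blast
qed

lemma tree_from_level:
  assumes "symp E" "U \<subseteq> V" "x \<in> level V E M U k" "x \<notin> F" "finite F"
    "card F + (\<Delta> + 1) ^ k \<le> M" "r \<le> \<Delta>"
  shows "\<exists>T par dep. rooted_tree_in V E \<Delta> k r x U T par dep \<and> finite T \<and> T \<inter> F = {}
    \<and> card T \<le> (\<Delta> + 1) ^ k"
  using assms(3-)
proof (induction k arbitrary: x F r)
  case 0
  then have "rooted_tree_in V E \<Delta> 0 r x U {x} id (\<lambda>_. 0)"
    using rooted_tree_in_leaf \<open>U \<subseteq> V\<close> by auto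
  then show ?case using 0 by fastforce
next
  case (Suc k)
  have IH: "\<exists>T par dep. rooted_tree_in V E \<Delta> k (\<Delta> - 1) y U T par dep \<and> finite T
      \<and> T \<inter> F' = {} \<and> card T \<le> (\<Delta> + 1) ^ k"
    if "y \<in> level V E M U k" "y \<notin> F'" "finite F'" "card F' + (\<Delta> + 1) ^ k \<le> M" for y F'
    using Suc.IH[OF that diff_le_self] .
  have "r * (\<Delta> + 1) ^ k \<le> \<Delta> * (\<Delta> + 1) ^ k" "1 \<le> (\<Delta> + 1) ^ k"
    using \<open>r \<le> \<Delta>\<close> by simp_all
  then have "1 + r * (\<Delta> + 1) ^ k \<le> (\<Delta> + 1) ^ Suc k"
    unfolding power_Suc[of "\<Delta> + 1"] distrib_right by linarith
  moreover obtain T par dep where T: "rooted_tree_in V E \<Delta> (Suc k) r x U T par dep" "finite T"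
    "T \<inter> F = {}" "card T \<le> 1 + r * (\<Delta> + 1) ^ k"
    using tree_from_level_Suc[OF \<open>symp E\<close> Suc.prems IH] by blast
  ultimately have "card T \<le> (\<Delta> + 1) ^ Suc k"
    by linarith
  with T show ?case
    by blast
qed

locale cut_dense_graph =
  fixes V :: "'a set" and E :: "'a \<Rightarrow> 'a \<Rightarrow> bool" and q :: real and n :: nat
  assumes simple: "simple_graph V E" and card_V: "card V = n" and cut_dense: "cut_dense V E q"
begin

lemma finite_V: "finite V"
  using simple unfolding simple_graph_def by blast

lemma symp_E: "symp E"
  using simple unfolding simple_graph_def symp_def by blast

lemma finite_if_subset_V: "S \<subseteq> V \<Longrightarrow> finite S"
  using finite_V finite_subset by blast

lemma card_le_n: "S \<subseteq> V \<Longrightarrow> card S \<le> n"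
  using finite_V card_V card_mono by metis

lemma cut_le_sum_degree_in:
  assumes "B \<subseteq> V"
  shows "q * card B * card (V - B) \<le> (\<Sum>y\<in>V - B. degree_in E y B)"
proof -
  have "B \<union> (V - B) = V" "B \<inter> (V - B) = {}"
    using assms by auto
  then have "q * card B * card (V - B) \<le> e_between E B (V - B)"
    using cut_dense unfolding cut_dense_def by blast
  also have "e_between E B (V - B) = (\<Sum>x\<in>B. degree_in E x (V - B))"
    using assms finite_if_subset_V by (simp add: e_between_eq_sum_degree_in)
  also have "\<dots> = (\<Sum>y\<in>V - B. degree_in E y B)"
    using assms finite_V finite_if_subset_V by (intro sum_degree_in_swap symp_E) auto
  finally show ?thesis .
qed

text \<open>The minimum degree bound is the cut condition for the cut \<open>{x}\<close>.\<close>
lemma degree_ge: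
  assumes "x \<in> V"
  shows "q * (real n - 1) \<le> degree_in E x V"
proof -
  have "{y \<in> V - {x}. E x y} = {y \<in> V. E x y}"
    using simple unfolding simple_graph_def by auto
  then have "(\<Sum>y\<in>V - {x}. degree_in E y {x}) = degree_in E x V"
    using sum_degree_in_swap[OF symp_E, of "{x}" "V - {x}"] finite_V
    by (simp add: degree_in_def)
  then have "q * card {x} * card (V - {x}) \<le> degree_in E x V"
    using cut_le_sum_degree_in[of "{x}"] assms by simp
  moreover have "0 < n"
    using assms finite_V card_V card_gt_0_iff by blast
  ultimately show ?thesis
    using assms finite_V card_V by (simp add: card_Diff_singleton of_nat_diff)
qed

lemma sum_degree_in_outside_rich_le:
  assumes "A \<subseteq> V - rich_in V E M S"
  shows "(\<Sum>y\<in>A. degree_in E y S) \<le> n * M"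
proof -
  have "degree_in E y S \<le> M" if "y \<in> A" for y
    using assms that unfolding rich_in_def by auto
  then have "(\<Sum>y\<in>A. degree_in E y S) \<le> card A * M"
    using sum_bounded_above[of A "\<lambda>y. degree_in E y S" M] by simp
  also have "\<dots> \<le> n * M"
    using card_le_n[of A] assms by (intro mult_le_mono1) auto
  finally show ?thesis .
qed

text \<open>Double counting: every vertex of \<open>S\<close> has degree at least \<open>q(n - 1)\<close>, while a vertex
  sends at most \<open>|S|\<close> edges to \<open>S\<close> if it is rich for \<open>S\<close>, and fewer than \<open>M\<close> otherwise.\<close>
lemma card_rich_in_lower_bound:
  assumes "S \<subseteq> V"
  shows "card S * (q * (real n - 1)) \<le> card (rich_in V E M S) * card S + M * n"
proof -
  let ?R = "rich_in V E M S"
  have "?R \<subseteq> V"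
    unfolding rich_in_def by blast
  have "(\<Sum>x\<in>S. degree_in E x V) = (\<Sum>y\<in>V. degree_in E y S)"
    using assms finite_V finite_if_subset_V by (intro sum_degree_in_swap symp_E)
  also have "\<dots> = (\<Sum>y\<in>V - ?R. degree_in E y S) + (\<Sum>y\<in>?R. degree_in E y S)"
    using \<open>?R \<subseteq> V\<close> finite_V by (rule sum.subset_diff)
  also have "(\<Sum>y\<in>?R. degree_in E y S) \<le> card ?R * card S"
    using degree_in_le_card[OF finite_if_subset_V[OF assms]]
      sum_bounded_above[of ?R "\<lambda>y. degree_in E y S" "card S"] by simp
  also have "(\<Sum>y\<in>V - ?R. degree_in E y S) \<le> n * M"
    by (intro sum_degree_in_outside_rich_le) auto
  finally have sum_le: "(\<Sum>x\<in>S. degree_in E x V) \<le> card ?R * card S + M * n"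
    by (simp add: algebra_simps)
  have "card S * (q * (real n - 1)) = (\<Sum>x\<in>S. q * (real n - 1))"
    by simp
  also have "\<dots> \<le> (\<Sum>x\<in>S. real (degree_in E x V))"
    using degree_ge assms by (intro sum_mono) auto
  also have "\<dots> = real (\<Sum>x\<in>S. degree_in E x V)"
    by simp
  also have "\<dots> \<le> card ?R * card S + M * n"
    using sum_le by (rule of_nat_mono)
  finally show ?thesis .
qed

text \<open>A vertex of \<open>S\<close> with fewer than \<open>M\<close> neighbours in \<open>R\<close> has almost all its
  neighbours outside \<open>R\<close>, and the vertices outside \<open>R\<close> receive fewer than \<open>Mn\<close> edges
  from \<open>S\<close> in total.\<close>
lemma card_poor_upper_bound:
  assumes "S \<subseteq> V" and R: "R = rich_in V E M S"
  shows "card {x \<in> S. degree_in E x R < M} * (q * (real n - 1) - M) \<le> M * n"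
proof -
  let ?P = "{x \<in> S. degree_in E x R < M}"
  have "R \<subseteq> V"
    unfolding R rich_in_def by blast
  have "q * (real n - 1) - M \<le> degree_in E x (V - R)" if "x \<in> ?P" for x
  proof -
    have "degree_in E x V = degree_in E x R + degree_in E x (V - R)"
      using degree_in_split[OF finite_V \<open>R \<subseteq> V\<close>] .
    then show ?thesis
      using that degree_ge[of x] assms(1) by auto
  qed
  then have "(\<Sum>x\<in>?P. q * (real n - 1) - M) \<le> (\<Sum>x\<in>?P. real (degree_in E x (V - R)))"
    by (intro sum_mono)
  then have "card ?P * (q * (real n - 1) - M) \<le> (\<Sum>x\<in>?P. degree_in E x (V - R))"
    by simp
  also have "(\<Sum>x\<in>?P. degree_in E x (V - R)) \<le> (\<Sum>x\<in>S. degree_in E x (V - R))"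
    using finite_if_subset_V[OF assms(1)] by (intro sum_mono2) auto
  also have "\<dots> = (\<Sum>y\<in>V - R. degree_in E y S)"
    using assms finite_V finite_if_subset_V by (intro sum_degree_in_swap symp_E) auto
  also have "\<dots> \<le> n * M"
    unfolding R by (intro sum_degree_in_outside_rich_le) auto
  finally show ?thesis
    by (simp add: algebra_simps)
qed

text \<open>Apply the cut condition to \<open>B = S \<union> R\<close>: vertices outside \<open>B\<close> have fewer than \<open>M\<close>
  neighbours in \<open>S\<close>, so most of the cut edges go to \<open>R\<close>, and they can only come from
  many vertices that are rich with respect to \<open>R\<close>.\<close>
lemma card_rich_outside_lower_bound:
  assumes "S \<subseteq> V" and R: "R = rich_in V E M S"
  shows "q * card (S \<union> R) * card (V - (S \<union> R))
    \<le> 2 * M * n + card (rich_in V E M R - (S \<union> R)) * n"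
proof -
  let ?B = "S \<union> R" and ?N = "rich_in V E M R - (S \<union> R)"
  have "R \<subseteq> V" "?N \<subseteq> V - ?B"
    unfolding R rich_in_def by auto
  then have "?B \<subseteq> V"
    using assms(1) by blast
  have "(\<Sum>y\<in>V - ?B. degree_in E y ?B)
      \<le> (\<Sum>y\<in>V - ?B. degree_in E y S) + (\<Sum>y\<in>V - ?B. degree_in E y R)"
    unfolding sum.distrib[symmetric] by (intro sum_mono degree_in_Un_le)
  also have "(\<Sum>y\<in>V - ?B. degree_in E y S) \<le> n * M"
    unfolding R by (intro sum_degree_in_outside_rich_le) auto
  also have "(\<Sum>y\<in>V - ?B. degree_in E y R)
      = (\<Sum>y\<in>V - ?B - ?N. degree_in E y R) + (\<Sum>y\<in>?N. degree_in E y R)"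
    using \<open>?N \<subseteq> V - ?B\<close> finite_V by (intro sum.subset_diff) auto
  also have "(\<Sum>y\<in>V - ?B - ?N. degree_in E y R) \<le> n * M"
    by (intro sum_degree_in_outside_rich_le) auto
  also have "(\<Sum>y\<in>?N. degree_in E y R) \<le> card ?N * n"
  proof -
    have "degree_in E y R \<le> n" for y
      using degree_in_le_card[OF finite_if_subset_V[OF \<open>R \<subseteq> V\<close>]] card_le_n[OF \<open>R \<subseteq> V\<close>]
      by (rule le_trans)
    then show ?thesis
      using sum_bounded_above[of ?N "\<lambda>y. degree_in E y R" n] by simp
  qed
  finally have "(\<Sum>y\<in>V - ?B. degree_in E y ?B) \<le> 2 * M * n + card ?N * n"
    by (simp add: algebra_simps)
  then have "real (\<Sum>y\<in>V - ?B. degree_in E y ?B) \<le> 2 * M * n + card ?N * n"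
    by (rule of_nat_mono)
  with cut_le_sum_degree_in[OF \<open>?B \<subseteq> V\<close>] show ?thesis
    by (rule order_trans)
qed

end

lemma height_bound:
  fixes q :: real
  assumes "0 < q" "q \<le> 1"
  shows "real (2 * (nat \<lfloor>5 / q ^ 3\<rfloor> + 1)) \<le> 19 / q ^ 4"
proof -
  have "5 / q ^ 3 \<le> 5 / q ^ 4"
    using assms power_decreasing[of 3 4 q] by (simp add: divide_left_mono)
  moreover have "1 \<le> 1 / q ^ 4"
    using assms by (simp add: power_le_one)
  moreover have "real (nat \<lfloor>5 / q ^ 3\<rfloor>) \<le> 5 / q ^ 3"
    using assms by simp
  ultimately show ?thesis
    by simp
qed

locale level_growth = cut_dense_graph V E q n
  for V :: "'a set" and E :: "'a \<Rightarrow> 'a \<Rightarrow> bool" and q :: real and n :: nat +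
  fixes M :: nat and U :: "'a set"
  assumes U_subset: "U \<subseteq> V" and M_pos: "1 \<le> M" and q_pos: "0 < q" and q_le_1: "q \<le> 1"
    and U_large: "4 * M \<le> q * card U" and n_large: "200 * M \<le> q ^ 4 * n"
begin

abbreviation S :: "nat \<Rightarrow> 'a set" where
  "S k \<equiv> level V E M U k"

lemma level_subset_V: "S k \<subseteq> V"
  using level_subset[OF U_subset] .

lemma n_ge_200: "200 \<le> real n"
proof -
  have "q ^ 4 \<le> 1"
    using q_pos q_le_1 by (simp add: power_le_one)
  then have "q ^ 4 * n \<le> n"
    using mult_right_mono[of "q ^ 4" 1 "real n"] by simp
  moreover have "200 \<le> 200 * real M"
    using M_pos by simp
  ultimately show ?thesis
    using n_large by linarith
qed

lemma M_small: "200 * M \<le> q ^ 2 * n" "200 * M \<le> q * n"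
proof -
  have "q ^ 4 \<le> q ^ 2" "q ^ 2 \<le> q ^ 1"
    using power_decreasing[of 2 4 q] power_decreasing[of 1 2 q] q_pos q_le_1 by simp_all
  then have "q ^ 4 * n \<le> q ^ 2 * n" "q ^ 2 * n \<le> q * n"
    by (simp_all add: mult_right_mono)
  then show "200 * M \<le> q ^ 2 * n" "200 * M \<le> q * n"
    using n_large by linarith+
qed

lemma card_rich_in_ge:
  assumes "T \<subseteq> V" and "4 * M \<le> q * card T"
  shows "q * n / 2 \<le> card (rich_in V E M T)"
proof -
  have "0 < card T"
    by (rule ccontr) (use assms(2) M_pos in simp)
  have "card T * (q * (real n - 1)) \<le> card (rich_in V E M T) * card T + M * n"
    using card_rich_in_lower_bound[OF assms(1)] by simp
  moreover have "M * n \<le> card T * (q * n / 4)"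
    using mult_right_mono[OF assms(2), of n] by (simp add: algebra_simps)
  ultimately have
    "card T * (q * (real n - 1)) \<le> card T * (card (rich_in V E M T) + q * n / 4)"
    by (simp add: algebra_simps)
  then have "q * (real n - 1) \<le> card (rich_in V E M T) + q * n / 4"
    using \<open>0 < card T\<close> by simp
  moreover have "4 * q \<le> q * n"
    using n_ge_200 q_pos by simp
  ultimately show ?thesis
    by (simp add: algebra_simps)
qed

lemma level_large: "4 * M \<le> q * card (S k)"
proof (induction k)
  case 0
  then show ?case using U_large by simp
next
  case (Suc k)
  have "q * n / 2 \<le> card (S (Suc k))"
    using card_rich_in_ge[OF level_subset_V Suc] by simp
  then have "q * (q * n / 2) \<le> q * card (S (Suc k))"
    using q_pos by simp
  moreover have "q * (q * n / 2) = q ^ 2 * n / 2"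
    by (simp add: power2_eq_square)
  ultimately show ?case
    using M_small(1) by linarith
qed

lemma card_level_Suc_ge: "q * n / 2 \<le> card (S (Suc k))"
  using card_rich_in_ge[OF level_subset_V level_large] by simp

definition poor :: "nat \<Rightarrow> 'a set" where
  "poor k = {x \<in> S k. degree_in E x (S (Suc k)) < M}"

lemma card_poor_le: "q * card (poor k) \<le> 2 * M"
proof -
  have "card (poor k) * (q * (real n - 1) - M) \<le> M * n"
    using card_poor_upper_bound[OF level_subset_V, of "S (Suc k)"] unfolding poor_def by simp
  moreover have "q * n / 2 \<le> q * (real n - 1) - M"
    using M_small(2) q_le_1 M_pos by (simp add: algebra_simps)
  ultimately have "card (poor k) * (q * n / 2) \<le> M * n"
    by (meson mult_left_mono of_nat_0_le_iff order_trans)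
  then have "n * (q * card (poor k)) \<le> n * (2 * M)"
    by (simp add: algebra_simps)
  then show ?thesis
    using n_ge_200 by simp
qed

definition window :: "nat \<Rightarrow> 'a set" where
  "window k = S k \<union> S (Suc k)"

lemma window_subset_V: "window k \<subseteq> V"
  unfolding window_def using level_subset_V by blast

lemma card_new_level_ge:
  assumes "q * n / 2 \<le> card (V - window k)"
  shows "q ^ 3 * n / 4 \<le> 2 * M + card (S (Suc (Suc k)) - window k)"
proof -
  have "q * n / 2 \<le> card (window k)"
    using card_level_Suc_ge[of k] card_mono[OF finite_if_subset_V[OF window_subset_V], of "S (Suc k)"]
    unfolding window_def by fastforce
  with assms have "q * (q * n / 2) * (q * n / 2) \<le> q * card (window k) * card (V - window k)"
    using q_pos by (intro mult_mono) auto
  also have "\<dots> \<le> 2 * M * n + card (S (Suc (Suc k)) - window k) * n"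
    using card_rich_outside_lower_bound[OF level_subset_V, of "S (Suc k)" M k]
    unfolding window_def by simp
  finally have "n * (q ^ 3 * n / 4) \<le> n * (2 * M + card (S (Suc (Suc k)) - window k))"
    by (simp add: power3_eq_cube algebra_simps)
  then show ?thesis
    using n_ge_200 by simp
qed

text \<open>Vertices of \<open>S k\<close> outside \<open>poor k\<close> lie in \<open>S (k + 2)\<close>, and those of \<open>S (k + 1)\<close>
  outside \<open>poor (k + 1)\<close> lie in \<open>S (k + 3)\<close>.\<close>
lemma window_minus_poor_subset:
  "window k - (poor k \<union> poor (Suc k)) \<subseteq> window (Suc (Suc k))"
  using level_subset_V unfolding window_def poor_def by (auto simp: rich_in_def)

lemma window_growth:
  assumes "q * n / 2 \<le> card (V - window k)"
  shows "card (window k) + q ^ 3 * n / 5 \<le> card (window (Suc (Suc k)))"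
proof -
  let ?W = "window k" and ?W' = "window (Suc (Suc k))"
  let ?P = "poor k \<union> poor (Suc k)" and ?N = "S (Suc (Suc k)) - window k"
  have "?W \<subseteq> V" "?N \<subseteq> V" "?P \<subseteq> V"
    using window_subset_V level_subset_V unfolding poor_def by blast+
  then have fin: "finite ?W" "finite ?N" "finite ?P"
    using finite_if_subset_V by simp_all
  have "card ?W - card ?P \<le> card (?W - ?P)"
    using fin(3) by (rule diff_card_le_card_Diff)
  moreover have "card ?P \<le> card (poor k) + card (poor (Suc k))"
    by (rule card_Un_le)
  moreover have "card (?W - ?P) + card ?N \<le> card ?W'"
  proof -
    have "(?W - ?P) \<union> ?N \<subseteq> ?W'"
      using window_minus_poor_subset unfolding window_def by blast
    then have "card ((?W - ?P) \<union> ?N) \<le> card ?W'"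
      using finite_if_subset_V[OF window_subset_V] by (rule card_mono[rotated])
    moreover have "card ((?W - ?P) \<union> ?N) = card (?W - ?P) + card ?N"
      using fin by (intro card_Un_disjoint) auto
    ultimately show ?thesis
      by simp
  qed
  ultimately have "real (card ?W + card ?N) \<le> card ?W' + card (poor k) + card (poor (Suc k))"
    by linarith
  then have "q * (card ?W + card ?N) \<le> q * (card ?W' + card (poor k) + card (poor (Suc k)))"
    using q_pos by (intro mult_left_mono) auto
  then have
    "q * card ?W + q * card ?N \<le> q * card ?W' + q * card (poor k) + q * card (poor (Suc k))"
    by (simp add: distrib_left)
  moreover have "q ^ 4 * n / 4 \<le> 2 * (q * M) + q * card ?N"
    using mult_left_mono[OF card_new_level_ge[OF assms], of q] q_pos
    by (simp add: algebra_simps power_numeral_reduce)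
  moreover have "q * M \<le> M"
    using mult_left_le_one_le[of "real M" q] q_pos q_le_1 by simp
  ultimately have "q * card ?W + q ^ 4 * n / 5 \<le> q * card ?W'"
    using card_poor_le[of k] card_poor_le[of "Suc k"] n_large by linarith
  then have "q * (card ?W + q ^ 3 * n / 5) \<le> q * card ?W'"
    by (simp add: algebra_simps power_numeral_reduce)
  then show ?thesis
    using q_pos by (rule mult_left_le_imp_le)
qed

lemma window_iterated_growth:
  "(\<And>j. j < J \<Longrightarrow> q * n / 2 \<le> card (V - window (2 * j)))
    \<Longrightarrow> J * (q ^ 3 * n / 5) \<le> card (window (2 * J))"
proof (induction J)
  case 0
  then show ?case by simp
next
  case (Suc J)
  then have "J * (q ^ 3 * n / 5) \<le> card (window (2 * J))"
    by simp
  moreover have "card (window (2 * J)) + q ^ 3 * n / 5 \<le> card (window (Suc (Suc (2 * J))))"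
    using Suc.prems by (intro window_growth) simp
  ultimately show ?case
    by (simp add: algebra_simps)
qed

text \<open>Once the window misses fewer than \<open>qn/2\<close> vertices, any vertex has at least
  \<open>q(n - 1) - qn/2 \<ge> 2M\<close> neighbours inside it, hence at least \<open>M\<close> in one of its two levels.\<close>
lemma in_next_levels_if_window_large:
  assumes "card (V - window k) < q * n / 2" and "v \<in> V"
  shows "v \<in> S (Suc k) \<or> v \<in> S (Suc (Suc k))"
proof (rule ccontr)
  assume "\<not> ?thesis"
  then have "degree_in E v (S k) < M" "degree_in E v (S (Suc k)) < M"
    using assms(2) by (auto simp: rich_in_def)
  moreover have "degree_in E v V \<le> degree_in E v (window k) + degree_in E v (V - window k)"
    using degree_in_split[OF finite_V window_subset_V] by simp
  moreover have "degree_in E v (window k) \<le> degree_in E v (S k) + degree_in E v (S (Suc k))"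
    unfolding window_def by (rule degree_in_Un_le)
  moreover have "degree_in E v (V - window k) \<le> card (V - window k)"
    using finite_V by (intro degree_in_le_card) simp
  ultimately have "q * (real n - 1) < 2 * M + q * n / 2"
    using degree_ge[OF assms(2)] assms(1) by linarith
  then show False
    using M_small(2) q_le_1 M_pos by (simp add: algebra_simps)
qed

lemma vertex_in_some_level:
  assumes "v \<in> V"
  shows "\<exists>h \<le> 2 * (nat \<lfloor>5 / q ^ 3\<rfloor> + 1). v \<in> S h"
proof -
  define J where "J = nat \<lfloor>5 / q ^ 3\<rfloor> + 1"
  have "5 / q ^ 3 < J"
    unfolding J_def using q_pos by linarith
  then have "5 < J * q ^ 3"
    using q_pos by (simp add: divide_less_eq)
  then have "5 * real n < J * q ^ 3 * n"
    using n_ge_200 by simp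
  then have "n < J * (q ^ 3 * n / 5)"
    by (simp add: algebra_simps)
  moreover have "card (window (2 * J)) \<le> n"
    using card_le_n[OF window_subset_V] .
  ultimately obtain j where "j < J" "card (V - window (2 * j)) < q * n / 2"
    using window_iterated_growth[of J] by (meson le_less_trans not_le of_nat_le_iff)
  then have "Suc (Suc (2 * j)) \<le> 2 * J" "v \<in> S (Suc (2 * j)) \<or> v \<in> S (Suc (Suc (2 * j)))"
    using in_next_levels_if_window_large assms by auto
  then show ?thesis
    unfolding J_def by (meson Suc_leD)
qed

lemma exists_perfect_tree:
  assumes "v \<in> V" and "(\<Delta> + 1) ^ (2 * (nat \<lfloor>5 / q ^ 3\<rfloor> + 1)) \<le> M"
  shows "\<exists>h T par dep. real h \<le> 19 / q ^ 4 \<and> perfect_tree_in V E \<Delta> h v U T par dep"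
proof -
  obtain h where h: "h \<le> 2 * (nat \<lfloor>5 / q ^ 3\<rfloor> + 1)" and v: "v \<in> S h"
    using vertex_in_some_level[OF assms(1)] by blast
  then have "(\<Delta> + 1) ^ h \<le> M"
    using assms(2) power_increasing[OF h, of "\<Delta> + 1"] by simp
  then obtain T par dep where "rooted_tree_in V E \<Delta> h \<Delta> v U T par dep"
    using tree_from_level[OF symp_E U_subset v, where F = "{}" and r = \<Delta> and \<Delta> = \<Delta>] by auto
  moreover have "real h \<le> 19 / q ^ 4"
    using height_bound[OF q_pos q_le_1] h by linarith
  ultimately show ?thesis
    unfolding perfect_tree_in_eq_rooted_tree_in by blast
qed

end

lemma le_mult_if_nat_ceiling_divide_le:
  fixes a q :: real
  assumes "0 < q" and "nat \<lceil>a / q\<rceil> \<le> m"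
  shows "a \<le> q * m"
proof -
  have "a / q \<le> m"
    using assms(2) by linarith
  then show ?thesis
    using assms(1) by (simp add: divide_le_eq mult.commute)
qed

theorem lemma7p2:
  fixes \<Delta> :: nat and q :: real
  assumes "\<Delta> \<ge> 1" and "0 < q" and "q \<le> 1"
  shows "\<exists>L0::nat. \<forall>L\<ge>L0. \<exists>n0::nat. \<forall>n\<ge>n0.
     \<forall>(V::'a set) E v U.
       simple_graph V E \<and> card V = n \<and> cut_dense V E q \<and>
       v \<in> V \<and> U \<subseteq> V \<and> card U \<ge> L \<longrightarrow>
       (\<exists>h T par dep. real h \<le> 19 / q ^ 4 \<and> perfect_tree_in V E \<Delta> h v U T par dep)"
proof -
  define H where "H = 2 * (nat \<lfloor>5 / q ^ 3\<rfloor> + 1)"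
  \<comment> \<open>\<open>M\<close> bounds the size of every \<open>\<Delta>\<close>-ary tree of height at most \<open>H\<close>.\<close>
  define M where "M = (\<Delta> + 1) ^ H"
  have "\<exists>h T par dep. real h \<le> 19 / q ^ 4 \<and> perfect_tree_in V E \<Delta> h v U T par dep"
    if "nat \<lceil>4 * M / q\<rceil> \<le> L" "nat \<lceil>200 * M / q ^ 4\<rceil> \<le> n" and G: "simple_graph V E"
      "card V = n" "cut_dense V E q" and "v \<in> V" "U \<subseteq> V" "L \<le> card U"
    for L n :: nat and V :: "'a set" and E v U
  proof -
    have "4 * M \<le> q * card U" "200 * M \<le> q ^ 4 * n"
      using that le_mult_if_nat_ceiling_divide_le \<open>0 < q\<close> by (fastforce intro: order_trans)+
    then interpret level_growth V E q n M U
      using G \<open>U \<subseteq> V\<close> \<open>0 < q\<close> \<open>q \<le> 1\<close> by unfold_locales (auto simp: M_def)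
    show ?thesis
      using exists_perfect_tree[OF \<open>v \<in> V\<close>] unfolding M_def H_def by simp
  qed
  then show ?thesis
    by blast
qed

end
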